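(* Let $G$ be a finite group acting transitively on a finite set $X$, and let $\mathscr{A}$ be the algebra of complex $X\times X$ matrices $M$ with $M_{g\cdot x,g\cdot y}=M_{x,y}$ for all $g\in G$, $x,y\in X$. Let $\mathcal{G}\in\mathscr{A}$ and let $\Phi=\{\phi_x\}_{x\in X}$ be a family of vectors (spanning a Hilbert space $\mathcal{H}$) whose Gram matrix $[\langle\phi_y,\phi_x\rangle]_{x,y}$ equals $\mathcal{G}$. Then $\Phi$ is a tight frame for $\mathcal{H}$ if and only if any (equivalently, every) projective reduction of $\Phi$ is a tight frame for $\mathcal{H}$.
   Context: For a family $\Phi=\{\phi_x\}_{x\in X}$, $x\sim y$ means $\phi_y=\alpha\phi_x$ for some unimodular $\alpha$; a projective reduction of $\Phi$ consists of one vector $\phi_x$ from each $\sim$-equivalence class. A family is a tight frame for $\mathcal{H}$ if $\sum_x|\langle\psi,\phi_x\rangle|^2=A\|\psi\|^2$ for all $\psi\in\mathcal{H}$ and some constant $A>0$. *)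

theory Defs
  imports "HOL-Analysis.Analysis" "HOL-Algebra.Group_Action"
begin

text \<open>Vectors of a finite-dimensional complex Hilbert space are modelled as
  functions 'n \<Rightarrow> complex over a finite coordinate type 'n, with the standard
  inner product (linear in the first argument, conjugate-linear in the second).\<close>

definition cinner :: "('n::finite \<Rightarrow> complex) \<Rightarrow> ('n \<Rightarrow> complex) \<Rightarrow> complex" where
  "cinner u v = (\<Sum>i\<in>UNIV. u i * cnj (v i))"

definition cnorm2 :: "('n::finite \<Rightarrow> complex) \<Rightarrow> real" where
  "cnorm2 u = (\<Sum>i\<in>UNIV. (cmod (u i))\<^sup>2)"

definition cspan_fam :: "('x \<Rightarrow> ('n::finite \<Rightarrow> complex)) \<Rightarrow> 'x set \<Rightarrow> ('n \<Rightarrow> complex) set" where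
  "cspan_fam phi X = {psi. \<exists>c. psi = (\<lambda>i. \<Sum>x\<in>X. c x * phi x i)}"

definition tight_frame :: "('x \<Rightarrow> ('n::finite \<Rightarrow> complex)) \<Rightarrow> 'x set \<Rightarrow> ('n \<Rightarrow> complex) set \<Rightarrow> bool" where
  "tight_frame phi I H \<longleftrightarrow>
     (\<exists>A>0. \<forall>psi\<in>H. (\<Sum>x\<in>I. (cmod (cinner psi (phi x)))\<^sup>2) = A * cnorm2 psi)"

definition proj_equiv :: "('x \<Rightarrow> ('n \<Rightarrow> complex)) \<Rightarrow> 'x \<Rightarrow> 'x \<Rightarrow> bool" where
  "proj_equiv phi x y \<longleftrightarrow> (\<exists>\<alpha>::complex. cmod \<alpha> = 1 \<and> phi y = (\<lambda>i. \<alpha> * phi x i))"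

definition projective_reduction :: "('x \<Rightarrow> ('n \<Rightarrow> complex)) \<Rightarrow> 'x set \<Rightarrow> 'x set \<Rightarrow> bool" where
  "projective_reduction phi X R \<longleftrightarrow>
     R \<subseteq> X \<and> (\<forall>x\<in>X. \<exists>!r. r \<in> R \<and> proj_equiv phi x r)"

end

theory Submission
  imports Defs
begin

text \<open>A Gram-preserving action maps \<open>\<sim>\<close>-classes bijectively onto \<open>\<sim>\<close>-classes, so by
  transitivity all classes have the same size \<open>k\<close>. Since \<open>|\<langle>\<psi>, \<phi>\<^sub>x\<rangle>|\<close> is constant on
  each class, the frame sum over \<open>X\<close> is \<open>k\<close> times the frame sum over any projective
  reduction, and tightness transfers in both directions.\<close>

lemma cinner_commute: "cinner u v = cnj (cinner v u)"
  unfolding cinner_def by (simp add: mult.commute)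

lemma cinner_self_eq_0_iff: "cinner w w = 0 \<longleftrightarrow> w = (\<lambda>i. 0)"
proof
  assume "cinner w w = 0"
  moreover have "cinner w w = of_real (\<Sum>i\<in>UNIV. (cmod (w i))\<^sup>2)"
    unfolding cinner_def of_real_sum by (simp add: complex_norm_square[symmetric])
  ultimately have "(\<Sum>i\<in>UNIV. (cmod (w i))\<^sup>2) = 0" by (simp only: of_real_eq_0_iff)
  then show "w = (\<lambda>i. 0)" by (simp add: sum_nonneg_eq_0_iff fun_eq_iff)
qed (simp add: cinner_def)

lemma cinner_diff_scaled_self:
  "cinner (\<lambda>i. v i - \<alpha> * u i) (\<lambda>i. v i - \<alpha> * u i) =
   cinner v v - cnj \<alpha> * cinner v u - \<alpha> * cinner u v + \<alpha> * cnj \<alpha> * cinner u u"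
  unfolding cinner_def
  by (simp add: sum_distrib_left sum_subtractf[symmetric] sum.distrib[symmetric] algebra_simps)

text \<open>The relation \<open>b = \<alpha> a\<close> is encoded in the Gram matrix of \<open>(a, b)\<close>, as
  \<open>\<parallel>b - \<alpha> a\<parallel>\<^sup>2\<close> is a polynomial in its entries.\<close>

lemma scaled_if_same_gram:
  fixes u v a b :: "'n::finite \<Rightarrow> complex"
  assumes "cinner u u = cinner a a" "cinner v v = cinner b b" "cinner v u = cinner b a"
    and "b = (\<lambda>i. \<alpha> * a i)"
  shows "v = (\<lambda>i. \<alpha> * u i)"
proof -
  have "cinner (\<lambda>i. v i - \<alpha> * u i) (\<lambda>i. v i - \<alpha> * u i) =
        cinner (\<lambda>i. b i - \<alpha> * a i) (\<lambda>i. b i - \<alpha> * a i)"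
    unfolding cinner_diff_scaled_self
    using assms(1-3) cinner_commute[of u v] cinner_commute[of a b] by simp
  also have "\<dots> = 0" using assms(4) by (simp add: cinner_def)
  finally show ?thesis by (simp add: cinner_self_eq_0_iff fun_eq_iff)
qed

lemma proj_equiv_refl: "proj_equiv phi x x"
  unfolding proj_equiv_def by (intro exI[of _ 1]) simp

lemma proj_equiv_sym:
  assumes "proj_equiv phi x y" shows "proj_equiv phi y x"
proof -
  obtain \<alpha> where \<alpha>: "cmod \<alpha> = 1" "phi y = (\<lambda>i. \<alpha> * phi x i)"
    using assms unfolding proj_equiv_def by blast
  have "cnj \<alpha> * \<alpha> = 1"
    using complex_norm_square[of \<alpha>] \<alpha>(1) by (simp add: mult.commute)
  then have "phi x = (\<lambda>i. cnj \<alpha> * phi y i)"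
    using \<alpha>(2) by (simp add: mult.assoc[symmetric])
  then show ?thesis unfolding proj_equiv_def using \<alpha>(1) by (intro exI[of _ "cnj \<alpha>"]) simp
qed

lemma proj_equiv_trans:
  assumes "proj_equiv phi x y" "proj_equiv phi y z" shows "proj_equiv phi x z"
proof -
  obtain \<alpha> where "cmod \<alpha> = 1" "phi y = (\<lambda>i. \<alpha> * phi x i)"
    using assms(1) unfolding proj_equiv_def by blast
  moreover obtain \<beta> where "cmod \<beta> = 1" "phi z = (\<lambda>i. \<beta> * phi y i)"
    using assms(2) unfolding proj_equiv_def by blast
  ultimately show ?thesis unfolding proj_equiv_def
    by (intro exI[of _ "\<beta> * \<alpha>"]) (simp add: norm_mult mult.assoc)
qed

lemma proj_equiv_cmod_cinner_eq:
  assumes "proj_equiv phi x y"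
  shows "cmod (cinner psi (phi x)) = cmod (cinner psi (phi y))"
proof -
  obtain \<alpha> where \<alpha>: "cmod \<alpha> = 1" "phi y = (\<lambda>i. \<alpha> * phi x i)"
    using assms unfolding proj_equiv_def by blast
  have "cinner psi (phi y) = cnj \<alpha> * cinner psi (phi x)"
    unfolding cinner_def \<alpha>(2) by (simp add: sum_distrib_left algebra_simps)
  then show ?thesis using \<alpha>(1) by (simp add: norm_mult)
qed

lemma proj_equiv_map_if_gram_preserving:
  assumes gram: "\<forall>x\<in>X. \<forall>y\<in>X. cinner (phi (h y)) (phi (h x)) = cinner (phi y) (phi x)"
    and "x \<in> X" "y \<in> X" "proj_equiv phi x y"
  shows "proj_equiv phi (h x) (h y)"
proof -
  obtain \<alpha> where \<alpha>: "cmod \<alpha> = 1" "phi y = (\<lambda>i. \<alpha> * phi x i)"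
    using assms(4) unfolding proj_equiv_def by blast
  have "phi (h y) = (\<lambda>i. \<alpha> * phi (h x) i)"
    by (rule scaled_if_same_gram[OF _ _ _ \<alpha>(2)]) (use gram assms(2,3) in auto)
  then show ?thesis unfolding proj_equiv_def using \<alpha>(1) by blast
qed

definition proj_class :: "('x \<Rightarrow> ('n \<Rightarrow> complex)) \<Rightarrow> 'x set \<Rightarrow> 'x \<Rightarrow> 'x set" where
  "proj_class phi X r = {x\<in>X. proj_equiv phi x r}"

lemma (in transitive_action) card_proj_class_le:
  assumes gram: "\<forall>g\<in>carrier G. \<forall>x\<in>E. \<forall>y\<in>E.
                   cinner (phi (\<phi> g y)) (phi (\<phi> g x)) = cinner (phi y) (phi x)"
    and "finite E" "r \<in> E" "r' \<in> E"
  shows "card (proj_class phi E r) \<le> card (proj_class phi E r')"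
proof -
  obtain g where g: "g \<in> carrier G" "\<phi> g r = r'" using unique_orbit assms(3,4) by blast
  have "inj_on (\<phi> g) (proj_class phi E r)"
    using inj_prop[OF g(1)] unfolding proj_class_def by (rule inj_on_subset) auto
  moreover have "\<phi> g ` proj_class phi E r \<subseteq> proj_class phi E r'"
    using g assms(3) element_image proj_equiv_map_if_gram_preserving[of E phi "\<phi> g"] gram
    unfolding proj_class_def by auto
  moreover have "finite (proj_class phi E r')"
    using assms(2) unfolding proj_class_def by simp
  ultimately show ?thesis by (rule card_inj_on_le)
qed

lemma (in transitive_action) card_proj_class_const:
  assumes "\<forall>g\<in>carrier G. \<forall>x\<in>E. \<forall>y\<in>E.
             cinner (phi (\<phi> g y)) (phi (\<phi> g x)) = cinner (phi y) (phi x)"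
    and "finite E"
  obtains k :: nat where "k > 0" "\<And>r. r \<in> E \<Longrightarrow> card (proj_class phi E r) = k"
proof (cases "E = {}")
  case False
  then obtain r0 where r0: "r0 \<in> E" by blast
  have "r0 \<in> proj_class phi E r0" using r0 proj_equiv_refl unfolding proj_class_def by simp
  then have "card (proj_class phi E r0) > 0"
    using assms(2) card_gt_0_iff unfolding proj_class_def by fastforce
  moreover have "card (proj_class phi E r) = card (proj_class phi E r0)" if "r \<in> E" for r
    using card_proj_class_le[OF assms] r0 that by (meson antisym)
  ultimately show ?thesis using that by blast
qed (use that in auto)

text \<open>Each \<open>x \<in> X\<close> is counted at its unique representative in \<open>R\<close>, which receives
  exactly \<open>|class|\<close> contributions.\<close>

lemma sum_over_projective_reduction:
  fixes f :: "'x \<Rightarrow> 'a::comm_ring_1"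
  assumes "finite X" and R: "projective_reduction phi X R"
    and card_class: "\<And>r. r \<in> R \<Longrightarrow> card (proj_class phi X r) = k"
    and f_class: "\<And>x r. proj_equiv phi x r \<Longrightarrow> f x = f r"
  shows "(\<Sum>x\<in>X. f x) = of_nat k * (\<Sum>r\<in>R. f r)"
proof -
  have RX: "R \<subseteq> X" and unique: "\<And>x. x \<in> X \<Longrightarrow> \<exists>!r. r \<in> R \<and> proj_equiv phi x r"
    using R unfolding projective_reduction_def by auto
  have finR: "finite R" using RX assms(1) finite_subset by blast
  have "(\<Sum>x\<in>X. f x) = (\<Sum>x\<in>X. \<Sum>r\<in>R. if proj_equiv phi x r then f r else 0)"
  proof (rule sum.cong[OF refl])
    fix x assume "x \<in> X"
    then obtain r0 where r0: "r0 \<in> R" "proj_equiv phi x r0"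
      and r0_unique: "\<And>r. r \<in> R \<Longrightarrow> proj_equiv phi x r \<Longrightarrow> r = r0"
      using unique by blast
    have "(\<Sum>r\<in>R. if proj_equiv phi x r then f r else 0) = (\<Sum>r\<in>R. if r = r0 then f r else 0)"
      by (rule sum.cong[OF refl]) (metis r0_unique r0(2))
    also have "\<dots> = f x" using finR r0 f_class by simp
    finally show "f x = (\<Sum>r\<in>R. if proj_equiv phi x r then f r else 0)" ..
  qed
  also have "\<dots> = (\<Sum>r\<in>R. \<Sum>x\<in>X. if proj_equiv phi x r then f r else 0)"
    by (rule sum.swap)
  also have "\<dots> = (\<Sum>r\<in>R. of_nat (card (proj_class phi X r)) * f r)"
    unfolding proj_class_def by (simp add: sum.inter_filter[OF assms(1), symmetric])
  also have "\<dots> = of_nat k * (\<Sum>r\<in>R. f r)"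
    by (simp add: card_class sum_distrib_left)
  finally show ?thesis .
qed

lemma tight_frame_iff_if_frame_sums_proportional:
  assumes "k > 0"
    and "\<And>psi. psi \<in> H \<Longrightarrow> (\<Sum>x\<in>X. (cmod (cinner psi (phi x)))\<^sup>2)
                              = k * (\<Sum>r\<in>R. (cmod (cinner psi (phi r)))\<^sup>2)"
  shows "tight_frame phi X H \<longleftrightarrow> tight_frame phi R H"
proof
  assume "tight_frame phi X H"
  then obtain A where "A > 0" "\<forall>psi\<in>H. (\<Sum>x\<in>X. (cmod (cinner psi (phi x)))\<^sup>2) = A * cnorm2 psi"
    unfolding tight_frame_def by blast
  then show "tight_frame phi R H" unfolding tight_frame_def
    using assms by (intro exI[of _ "A / k"]) (auto simp: field_simps)
next
  assume "tight_frame phi R H"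
  then obtain A where "A > 0" "\<forall>psi\<in>H. (\<Sum>r\<in>R. (cmod (cinner psi (phi r)))\<^sup>2) = A * cnorm2 psi"
    unfolding tight_frame_def by blast
  then show "tight_frame phi X H" unfolding tight_frame_def
    using assms by (intro exI[of _ "k * A"]) auto
qed

lemma projective_reduction_exists: "\<exists>R. projective_reduction phi X R"
proof -
  define rep where "rep x = (SOME y. y \<in> X \<and> proj_equiv phi x y)" for x
  have rep: "rep x \<in> X \<and> proj_equiv phi x (rep x)" if "x \<in> X" for x
  proof -
    have "x \<in> X \<and> proj_equiv phi x x" using that proj_equiv_refl by (intro conjI)
    then show ?thesis unfolding rep_def by (rule someI)
  qed
  have rep_cong: "rep x = rep z" if xz: "proj_equiv phi x z" for x z
  proof -
    have "proj_equiv phi x y \<longleftrightarrow> proj_equiv phi z y" for y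
      using proj_equiv_trans[OF proj_equiv_sym[OF xz], of y] proj_equiv_trans[OF xz, of y]
      by (rule iffI)
    then show ?thesis unfolding rep_def by simp
  qed
  have "\<exists>!r. r \<in> rep ` X \<and> proj_equiv phi x r" if x: "x \<in> X" for x
  proof (rule ex1I[of _ "rep x"])
    show "rep x \<in> rep ` X \<and> proj_equiv phi x (rep x)" using rep x by blast
  next
    fix r assume r: "r \<in> rep ` X \<and> proj_equiv phi x r"
    then obtain z where z: "z \<in> X" "r = rep z" by blast
    have "proj_equiv phi r z" using rep[OF z(1)] z(2) proj_equiv_sym[of phi z r] by simp
    then have "proj_equiv phi x z" using r proj_equiv_trans[of phi x r z] by simp
    then show "r = rep x" using rep_cong z(2) by simp
  qed
  moreover have "rep ` X \<subseteq> X" using rep by blast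
  ultimately have "projective_reduction phi X (rep ` X)"
    unfolding projective_reduction_def by blast
  then show ?thesis ..
qed

theorem corollary3p19:
  fixes G :: "('g, 'b) monoid_scheme"
    and X :: "'x set"
    and act :: "'g \<Rightarrow> 'x \<Rightarrow> 'x"
    and phi :: "'x \<Rightarrow> ('n::finite \<Rightarrow> complex)"
    and H :: "('n \<Rightarrow> complex) set"
  assumes "transitive_action G X act"
    and "finite (carrier G)"
    and "finite X"
    and gram_inv: "\<forall>g\<in>carrier G. \<forall>x\<in>X. \<forall>y\<in>X.
                     cinner (phi (act g y)) (phi (act g x)) = cinner (phi y) (phi x)"
    and H_def: "H = cspan_fam phi X"
  shows "(tight_frame phi X H \<longleftrightarrow> (\<exists>R. projective_reduction phi X R \<and> tight_frame phi R H))
       \<and> (tight_frame phi X H \<longleftrightarrow> (\<forall>R. projective_reduction phi X R \<longrightarrow> tight_frame phi R H))"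
proof -
  obtain k where k: "k > 0" "\<And>r. r \<in> X \<Longrightarrow> card (proj_class phi X r) = k"
    using transitive_action.card_proj_class_const[OF assms(1) gram_inv assms(3)] by blast
  have reduction_tight_iff: "tight_frame phi X H \<longleftrightarrow> tight_frame phi R H"
    if R: "projective_reduction phi X R" for R
  proof (rule tight_frame_iff_if_frame_sums_proportional)
    show "real k > 0" using k(1) by simp
    have "R \<subseteq> X" using R unfolding projective_reduction_def by (elim conjE)
    then show "(\<Sum>x\<in>X. (cmod (cinner psi (phi x)))\<^sup>2) = real k * (\<Sum>r\<in>R. (cmod (cinner psi (phi r)))\<^sup>2)"
      for psi
      by (intro sum_over_projective_reduction[OF assms(3) R])
        (auto simp: k(2) proj_equiv_cmod_cinner_eq)
  qed
  obtain R0 where "projective_reduction phi X R0"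
    using projective_reduction_exists[of phi X] by (elim exE)
  with reduction_tight_iff show ?thesis by (intro conjI iffI) auto
qed

end
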